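(* The Cauchy structure on ${\mathbf{R}_\mathbf{D}}$ restricts to a Cauchy structure on ${\mathbf{R}_\mathbf{E}}$: equipping ${\mathbf{R}_\mathbf{E}}$ with the restricted premetric, $\mathsf{rat}$ and $\lim$ of ${\mathbf{R}_\mathbf{D}}$ restrict to maps $\mathbf{Q}\to{\mathbf{R}_\mathbf{E}}$ and $\mathcal{C}_{{\mathbf{R}_\mathbf{E}}}\to{\mathbf{R}_\mathbf{E}}$, there is $\mathsf{eq}:\prod_{u,v:{\mathbf{R}_\mathbf{E}}}(\forall\varepsilon.u\sim_\varepsilon v)\to u=v$, and the four closeness laws of a Cauchy structure hold on ${\mathbf{R}_\mathbf{E}}$.
   Context: Work in univalent type theory with propositional truncation, function extensionality and propositional resizing; $\Omega$ is the type of propositions, $\exists$ and $\vee$ are truncated; a subtype of $A$ is a map $A\to\Omega$, identified with $\sum_{a:A}P(a)$ and its first projection into $A$. $\mathbf{Q}$ is the rationals, $\mathbf{Q}_+$ the positive rationals. Premetric spaces and Cauchy structures: a premetric on $R$ is $\sim:\mathbf{Q}_+\times R\times R\to\Omega$; a Cauchy approximation is $x:\mathbf{Q}_+\to R$ with $\forall\delta,\varepsilon.\,x_\delta\sim_{\delta+\varepsilon}x_\varepsilon$, forming $\mathcal{C}_R$; $u$ is a limit of $x$ if $\forall\varepsilon,\theta.\,x_\varepsilon\sim_{\varepsilon+\theta}u$; $R$ is Cauchy complete if all Cauchy approximations have limits. A Cauchy structure is a premetric space $R$ with $\mathsf{rat}:\mathbf{Q}\to R$, $\lim:\mathcal{C}_R\to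 R$, $\mathsf{eq}:\prod_{u,v}(\forall\varepsilon.u\sim_\varepsilon v)\to u=v$, and the laws: $-\varepsilon<q-r<\varepsilon$ implies $\mathsf{rat}(q)\sim_\varepsilon\mathsf{rat}(r)$; $\mathsf{rat}(q)\sim_\varepsilon y_\delta$ implies $\mathsf{rat}(q)\sim_{\varepsilon+\delta}\lim(y)$; $x_\delta\sim_\varepsilon\mathsf{rat}(r)$ implies $\lim(x)\sim_{\varepsilon+\delta}\mathsf{rat}(r)$; $x_\delta\sim_\varepsilon y_\eta$ implies $\lim(x)\sim_{\varepsilon+\delta+\eta}\lim(y)$. Dedekind reals: for $L,U:\mathbf{Q}\to\Omega$ and $x=(L,U)$, $q<x$ means $L(q)$, $x<r$ means $U(r)$; $x$ is a Dedekind cut if inhabited ($\exists q.\,q<x$, $\exists r.\,x<r$), rounded ($q<x\Leftrightarrow\exists q'>q.\,q'<x$; $x<r\Leftrightarrow\exists r'<r.\,x<r'$), transitive ($q<x\wedge x<r\Rightarrow q<r$) and located ($q<r\Rightarrow q<x\vee x<r$); ${\mathbf{R}_\mathbf{D}}$ is their type. $\mathsf{rat}(q)$: $r<\mathsf{rat}(q)\Leftrightarrow r<q$, $\mathsf{rat}(q)<r\Leftrightarrow q<r$. $q<x+y:=\exists s,t.(q=s+t)\wedge(s<x)\wedge(t<y)$, $x+y<r:=\exists s,t.(r=s+t)\wedge(x<s)\wedge(y<t)$; $q<-x:=x<-q$, $-x<r:=-r<x$; $q<|x|:=(q<x)\vee(q<-x)$, $|x|<r:=(x<r)\wedge(-x<r)$;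 $x\sim_\varepsilon y:=|x+(-y)|<\varepsilon$. For $x:\mathcal{C}_{{\mathbf{R}_\mathbf{D}}}$: $q<\lim(x):=\exists(\varepsilon,\theta:\mathbf{Q}_+).\,q+\varepsilon+\theta<x_\varepsilon$ and $\lim(x)<r:=\exists(\varepsilon,\theta:\mathbf{Q}_+).\,x_\varepsilon<r-\varepsilon-\theta$. With these, ${\mathbf{R}_\mathbf{D}}$ is a Cauchy structure. Euclidean reals: a subtype $S$ of ${\mathbf{R}_\mathbf{D}}$ carries the restricted premetric. ${\mathbf{R}_\mathbf{E}}$ is the smallest subtype of ${\mathbf{R}_\mathbf{D}}$ containing all $\mathsf{rat}(q)$ and Cauchy complete for the restricted premetric; concretely $u\in{\mathbf{R}_\mathbf{E}}$ iff $u\in S$ for every such subtype $S$. *)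

theory Defs
  imports Complex_Main
begin

text \<open>A candidate Dedekind real is a pair (L, U) of sets of rationals:
  q < x means q \<in> fst x, and x < r means r \<in> snd x.\<close>

type_synonym cut = "rat set \<times> rat set"

definition is_cut :: "cut \<Rightarrow> bool" where
  "is_cut x \<longleftrightarrow>
     (\<exists>q. q \<in> fst x) \<and> (\<exists>r. r \<in> snd x) \<and>
     (\<forall>q. q \<in> fst x \<longleftrightarrow> (\<exists>q'. q < q' \<and> q' \<in> fst x)) \<and>
     (\<forall>r. r \<in> snd x \<longleftrightarrow> (\<exists>r'. r' < r \<and> r' \<in> snd x)) \<and>
     (\<forall>q r. q \<in> fst x \<and> r \<in> snd x \<longrightarrow> q < r) \<and>
     (\<forall>q r. q < r \<longrightarrow> q \<in> fst x \<or> r \<in> snd x)"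

definition RD :: "cut set" where
  "RD = {x. is_cut x}"

definition rat_D :: "rat \<Rightarrow> cut" where
  "rat_D q = ({r. r < q}, {r. q < r})"

definition add_D :: "cut \<Rightarrow> cut \<Rightarrow> cut" where
  "add_D x y =
     ({q. \<exists>s t. q = s + t \<and> s \<in> fst x \<and> t \<in> fst y},
      {r. \<exists>s t. r = s + t \<and> s \<in> snd x \<and> t \<in> snd y})"

definition neg_D :: "cut \<Rightarrow> cut" where
  "neg_D x = ({q. - q \<in> snd x}, {r. - r \<in> fst x})"

definition abs_D :: "cut \<Rightarrow> cut" where
  "abs_D x = ({q. q \<in> fst x \<or> q \<in> fst (neg_D x)},
              {r. r \<in> snd x \<and> r \<in> snd (neg_D x)})"

definition close_D :: "rat \<Rightarrow> cut \<Rightarrow> cut \<Rightarrow> bool" where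
  "close_D \<epsilon> x y \<longleftrightarrow> \<epsilon> \<in> snd (abs_D (add_D x (neg_D y)))"

text \<open>Cauchy approximations with values in a subtype S of the Dedekind reals
  (restricted premetric); only the values at positive rationals matter.\<close>
definition cauchy_approx :: "cut set \<Rightarrow> (rat \<Rightarrow> cut) \<Rightarrow> bool" where
  "cauchy_approx S x \<longleftrightarrow>
     (\<forall>\<delta>>0. x \<delta> \<in> S) \<and>
     (\<forall>\<delta> \<epsilon>. 0 < \<delta> \<longrightarrow> 0 < \<epsilon> \<longrightarrow> close_D (\<delta> + \<epsilon>) (x \<delta>) (x \<epsilon>))"

definition is_limit :: "(rat \<Rightarrow> cut) \<Rightarrow> cut \<Rightarrow> bool" where
  "is_limit x u \<longleftrightarrow>
     (\<forall>\<epsilon> \<theta>. 0 < \<epsilon> \<longrightarrow> 0 < \<theta> \<longrightarrow> close_D (\<epsilon> + \<theta>) (x \<epsilon>) u)"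

definition cauchy_complete :: "cut set \<Rightarrow> bool" where
  "cauchy_complete S \<longleftrightarrow> (\<forall>x. cauchy_approx S x \<longrightarrow> (\<exists>u\<in>S. is_limit x u))"

definition lim_D :: "(rat \<Rightarrow> cut) \<Rightarrow> cut" where
  "lim_D x =
     ({q. \<exists>\<epsilon> \<theta>. 0 < \<epsilon> \<and> 0 < \<theta> \<and> q + \<epsilon> + \<theta> \<in> fst (x \<epsilon>)},
      {r. \<exists>\<epsilon> \<theta>. 0 < \<epsilon> \<and> 0 < \<theta> \<and> r - \<epsilon> - \<theta> \<in> snd (x \<epsilon>)})"

definition RE :: "cut set" where
  "RE = {u. u \<in> RD \<and>
           (\<forall>S. S \<subseteq> RD \<longrightarrow> range rat_D \<subseteq> S \<longrightarrow> cauchy_complete S \<longrightarrow> u \<in> S)}"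

end

theory Submission
  imports Defs
begin

text \<open>Classically every Dedekind cut is the cut of a unique real number, and under this
  correspondence the premetric becomes \<open>\<bar>a - b\<bar> < \<epsilon>\<close> and \<open>lim_D\<close> of a Cauchy approximation
  becomes the cut of its real limit. The closeness laws are then triangle inequalities
  for reals, and \<open>eq\<close> holds because a real distance below every positive rational is zero. For closure of \<open>RE\<close> under \<open>lim_D\<close>: a Cauchy approximation in
  \<open>RE\<close> lies in every rational-containing Cauchy complete subtype \<open>S\<close>, so it has a limit in
  \<open>S\<close>, and limits in \<open>RD\<close> are unique, so that limit is \<open>lim_D\<close>.\<close>

definition cut_of_real :: "real \<Rightarrow> cut" where
  "cut_of_real a = ({q. of_rat q < a}, {r. a < of_rat r})"

definition real_of_cut :: "cut \<Rightarrow> real" where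
  "real_of_cut x = Sup (of_rat ` fst x)"

lemma cut_of_real_in_RD: "cut_of_real a \<in> RD"
  unfolding RD_def is_cut_def cut_of_real_def fst_conv snd_conv mem_Collect_eq
proof (intro conjI allI impI)
  show "\<exists>q::rat. of_rat q < a" and "\<exists>r::rat. a < of_rat r"
    using of_rat_dense[of "a - 1" a] of_rat_dense[of a "a + 1"] by auto
  show "of_rat q < a \<longleftrightarrow> (\<exists>q'. q < q' \<and> of_rat q' < a)" for q
    by (metis of_rat_dense of_rat_less order.strict_trans)
  show "a < of_rat r \<longleftrightarrow> (\<exists>r'. r' < r \<and> a < of_rat r')" for r
    by (metis of_rat_dense of_rat_less order.strict_trans)
  show "q < r" if "of_rat q < a \<and> a < of_rat r" for q r
    using that by (metis of_rat_less order.strict_trans)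
  show "of_rat q < a \<or> a < of_rat r" if "q < r" for q r
    using that by (metis of_rat_less linorder_not_less order.strict_trans1)
qed

lemma inj_cut_of_real: "inj cut_of_real"
proof (rule injI)
  fix a b assume "cut_of_real a = cut_of_real b"
  then have "of_rat q < a \<longleftrightarrow> of_rat q < b" for q
    by (simp add: cut_of_real_def set_eq_iff)
  then have "\<not> a < b" and "\<not> b < a"
    by (metis of_rat_dense order.asym)+
  then show "a = b" by linarith
qed

lemma cut_of_real_real_of_cut:
  assumes "x \<in> RD" shows "cut_of_real (real_of_cut x) = x"
proof -
  have cut: "is_cut x" using assms by (simp add: RD_def)
  then have rounded_lower: "q \<in> fst x \<longleftrightarrow> (\<exists>q'. q < q' \<and> q' \<in> fst x)"
    and rounded_upper: "r \<in> snd x \<longleftrightarrow> (\<exists>r'. r' < r \<and> r' \<in> snd x)"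
    and transitive: "q \<in> fst x \<Longrightarrow> r \<in> snd x \<Longrightarrow> q < r"
    and located: "q < r \<Longrightarrow> q \<in> fst x \<or> r \<in> snd x" for q r
    unfolding is_cut_def by blast+
  let ?A = "of_rat ` fst x :: real set"
  have ne: "?A \<noteq> {}" using cut unfolding is_cut_def by blast
  have below_upper: "a \<le> of_rat r" if "a \<in> ?A" "r \<in> snd x" for a r
    using that transitive by (force simp: of_rat_less_eq intro: less_imp_le)
  have bdd: "bdd_above ?A"
    using cut below_upper unfolding is_cut_def bdd_above_def by blast
  have lower: "q \<in> fst x \<longleftrightarrow> of_rat q < real_of_cut x" for q
  proof
    assume "q \<in> fst x"
    then obtain q' where "q < q'" "q' \<in> fst x" using rounded_lower by blast
    then show "of_rat q < real_of_cut x"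
      unfolding real_of_cut_def
      by (meson bdd cSup_upper imageI less_le_trans of_rat_less)
  next
    assume "of_rat q < real_of_cut x"
    then obtain q' where "q' \<in> fst x" "q < q'"
      unfolding real_of_cut_def less_cSup_iff[OF ne bdd] by (auto simp: of_rat_less)
    then show "q \<in> fst x" using rounded_lower by blast
  qed
  have upper: "r \<in> snd x \<longleftrightarrow> real_of_cut x < of_rat r" for r
  proof
    assume "r \<in> snd x"
    then obtain r' where "r' < r" "r' \<in> snd x" using rounded_upper by blast
    moreover have "real_of_cut x \<le> of_rat r'"
      unfolding real_of_cut_def using ne below_upper \<open>r' \<in> snd x\<close> by (blast intro: cSup_least)
    ultimately show "real_of_cut x < of_rat r" by (simp add: le_less_trans of_rat_less)
  next
    assume "real_of_cut x < of_rat r"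
    then obtain s where "real_of_cut x < of_rat s" "s < r"
      using of_rat_dense by (metis of_rat_less)
    then show "r \<in> snd x" using located lower by fastforce
  qed
  show ?thesis unfolding cut_of_real_def by (rule prod_eqI) (auto simp: lower upper)
qed

lemma real_of_cut_cut_of_real: "real_of_cut (cut_of_real a) = a"
  using cut_of_real_real_of_cut[OF cut_of_real_in_RD] inj_cut_of_real by (simp add: inj_eq)

lemma rat_D_eq_cut_of_real: "rat_D q = cut_of_real (of_rat q)"
  unfolding rat_D_def cut_of_real_def by (auto simp: of_rat_less)

lemma add_D_cut_of_real: "add_D (cut_of_real a) (cut_of_real b) = cut_of_real (a + b)"
proof -
  have lower: "(\<exists>s t. q = s + t \<and> of_rat s < a \<and> of_rat t < b) \<longleftrightarrow> of_rat q < a + b" for q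
  proof
    assume "of_rat q < a + b"
    then obtain s where "of_rat q - b < of_rat s" "of_rat s < a"
      using of_rat_dense[of "of_rat q - b" a] by auto
    then show "\<exists>s t. q = s + t \<and> of_rat s < a \<and> of_rat t < b"
      by (intro exI[of _ s] exI[of _ "q - s"]) (auto simp: of_rat_diff)
  qed (auto simp: of_rat_add)
  have upper: "(\<exists>s t. q = s + t \<and> a < of_rat s \<and> b < of_rat t) \<longleftrightarrow> a + b < of_rat q" for q
  proof
    assume "a + b < of_rat q"
    then obtain s where "a < of_rat s" "of_rat s < of_rat q - b"
      using of_rat_dense[of a "of_rat q - b"] by auto
    then show "\<exists>s t. q = s + t \<and> a < of_rat s \<and> b < of_rat t"
      by (intro exI[of _ s] exI[of _ "q - s"]) (auto simp: of_rat_diff)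
  qed (auto simp: of_rat_add)
  show ?thesis unfolding add_D_def cut_of_real_def using lower upper by auto
qed

lemma neg_D_cut_of_real: "neg_D (cut_of_real a) = cut_of_real (- a)"
  unfolding neg_D_def cut_of_real_def by (auto simp: of_rat_minus)

lemma close_D_cut_of_real: "close_D \<epsilon> (cut_of_real a) (cut_of_real b) \<longleftrightarrow> \<bar>a - b\<bar> < of_rat \<epsilon>"
  unfolding close_D_def neg_D_cut_of_real add_D_cut_of_real abs_D_def
  by (auto simp: cut_of_real_def of_rat_minus)

lemma close_D_iff:
  assumes "u \<in> RD" "v \<in> RD"
  shows "close_D \<epsilon> u v \<longleftrightarrow> \<bar>real_of_cut u - real_of_cut v\<bar> < of_rat \<epsilon>"
  using close_D_cut_of_real cut_of_real_real_of_cut assms by metis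

lemma close_D_sym: "u \<in> RD \<Longrightarrow> v \<in> RD \<Longrightarrow> close_D \<epsilon> u v \<Longrightarrow> close_D \<epsilon> v u"
  by (simp add: close_D_iff abs_minus_commute)

lemma rat_D_in_RD: "rat_D q \<in> RD"
  by (simp add: rat_D_eq_cut_of_real cut_of_real_in_RD)

lemma close_D_rat_D: "\<bar>q - r\<bar> < \<epsilon> \<Longrightarrow> close_D \<epsilon> (rat_D q) (rat_D r)"
  by (simp add: rat_D_eq_cut_of_real close_D_cut_of_real of_rat_less flip: of_rat_diff)

lemma real_eq_if_rat_close:
  fixes a b :: real
  assumes "\<And>\<epsilon>. 0 < \<epsilon> \<Longrightarrow> \<bar>a - b\<bar> < of_rat \<epsilon>"
  shows "a = b"
proof (rule ccontr)
  assume "a \<noteq> b"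
  then obtain \<epsilon> where "0 < \<epsilon>" "of_rat \<epsilon> < \<bar>a - b\<bar>"
    using of_rat_dense[of 0 "\<bar>a - b\<bar>"] by force
  then show False using assms[of \<epsilon>] by simp
qed

lemma RD_eqI:
  assumes "u \<in> RD" "v \<in> RD" "\<And>\<epsilon>. 0 < \<epsilon> \<Longrightarrow> close_D \<epsilon> u v"
  shows "u = v"
  by (metis assms close_D_iff cut_of_real_real_of_cut real_eq_if_rat_close)

lemma rat_cauchy_family_has_limit:
  fixes g :: "rat \<Rightarrow> real"
  assumes cauchy: "\<And>\<delta> \<epsilon>. 0 < \<delta> \<Longrightarrow> 0 < \<epsilon> \<Longrightarrow> \<bar>g \<delta> - g \<epsilon>\<bar> < of_rat (\<delta> + \<epsilon>)"
  shows "\<exists>L. \<forall>\<delta>>0. \<bar>g \<delta> - L\<bar> \<le> of_rat \<delta>"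
proof -
  define A where "A = {g \<delta> - of_rat \<delta> | \<delta>. 0 < \<delta>}"
  have ne: "A \<noteq> {}" unfolding A_def by (auto intro!: exI[of _ 1])
  have below: "a \<le> g \<epsilon> + of_rat \<epsilon>" if "0 < \<epsilon>" "a \<in> A" for \<epsilon> a
    using that cauchy unfolding A_def by (force simp: of_rat_add)
  then have "bdd_above A" unfolding bdd_above_def by (meson zero_less_one)
  then have bounds: "g \<delta> - of_rat \<delta> \<le> Sup A" "Sup A \<le> g \<delta> + of_rat \<delta>" if "0 < \<delta>" for \<delta>
    using that ne below by (auto intro!: cSup_upper cSup_least simp: A_def)
  have "\<bar>g \<delta> - Sup A\<bar> \<le> of_rat \<delta>" if "0 < \<delta>" for \<delta>
    unfolding abs_le_iff using bounds[OF that] by linarith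
  then show ?thesis by blast
qed

lemma rat_below_limit_iff:
  fixes g :: "rat \<Rightarrow> real"
  assumes near: "\<And>\<delta>. 0 < \<delta> \<Longrightarrow> \<bar>g \<delta> - L\<bar> \<le> of_rat \<delta>"
  shows "(\<exists>\<epsilon> \<theta>. 0 < \<epsilon> \<and> 0 < \<theta> \<and> of_rat (q + \<epsilon> + \<theta>) < g \<epsilon>) \<longleftrightarrow> of_rat q < L"
proof
  assume "\<exists>\<epsilon> \<theta>. 0 < \<epsilon> \<and> 0 < \<theta> \<and> of_rat (q + \<epsilon> + \<theta>) < g \<epsilon>"
  then obtain \<epsilon> \<theta> where "0 < \<epsilon>" "0 < \<theta>" "of_rat q + of_rat \<epsilon> + of_rat \<theta> < g \<epsilon>"
    by (auto simp: of_rat_add)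
  moreover have "g \<epsilon> \<le> L + of_rat \<epsilon>" using near[OF \<open>0 < \<epsilon>\<close>] by linarith
  moreover have "(0::real) < of_rat \<theta>" using \<open>0 < \<theta>\<close> by simp
  ultimately show "of_rat q < L" by linarith
next
  assume "of_rat q < L"
  then obtain \<epsilon> where "0 < \<epsilon>" "3 * of_rat \<epsilon> < L - of_rat q"
    using of_rat_dense[of 0 "(L - of_rat q) / 3"] by (force simp: field_simps)
  moreover have "L - of_rat \<epsilon> \<le> g \<epsilon>" using near[of \<epsilon>] calculation by simp
  ultimately have "of_rat (q + \<epsilon> + \<epsilon>) < g \<epsilon>" unfolding of_rat_add by linarith
  with \<open>0 < \<epsilon>\<close> show "\<exists>\<epsilon> \<theta>. 0 < \<epsilon> \<and> 0 < \<theta> \<and> of_rat (q + \<epsilon> + \<theta>) < g \<epsilon>" by blast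
qed

lemma lim_D_cut_of_real:
  fixes g :: "rat \<Rightarrow> real"
  assumes x: "\<And>\<delta>. 0 < \<delta> \<Longrightarrow> x \<delta> = cut_of_real (g \<delta>)"
    and near: "\<And>\<delta>. 0 < \<delta> \<Longrightarrow> \<bar>g \<delta> - L\<bar> \<le> of_rat \<delta>"
  shows "lim_D x = cut_of_real L"
proof -
  have lower: "(\<exists>\<epsilon> \<theta>. 0 < \<epsilon> \<and> 0 < \<theta> \<and> q + \<epsilon> + \<theta> \<in> fst (x \<epsilon>)) \<longleftrightarrow> of_rat q < L" for q
    using rat_below_limit_iff[OF near] x by (simp add: cut_of_real_def cong: conj_cong)
  txt \<open>The upper cut is the lower cut of the reflected family \<open>- g\<close> at \<open>- r\<close>.\<close>
  have "\<bar>- g \<delta> - - L\<bar> \<le> of_rat \<delta>" if "0 < \<delta>" for \<delta>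
    using near[OF that] by linarith
  note upper_iff = rat_below_limit_iff[where g = "\<lambda>\<delta>. - g \<delta>", OF this]
  have "g \<epsilon> < of_rat (r - \<epsilon> - \<theta>) \<longleftrightarrow> of_rat (- r + \<epsilon> + \<theta>) < - g \<epsilon>" for r \<epsilon> \<theta>
    by (simp add: of_rat_add of_rat_diff of_rat_minus) linarith
  then have upper: "(\<exists>\<epsilon> \<theta>. 0 < \<epsilon> \<and> 0 < \<theta> \<and> r - \<epsilon> - \<theta> \<in> snd (x \<epsilon>)) \<longleftrightarrow> L < of_rat r" for r
    using x upper_iff[of "- r"] by (simp add: cut_of_real_def of_rat_minus cong: conj_cong)
  show ?thesis unfolding lim_D_def cut_of_real_def lower upper ..
qed

lemma cauchy_approx_mono: "S \<subseteq> T \<Longrightarrow> cauchy_approx S x \<Longrightarrow> cauchy_approx T x"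
  unfolding cauchy_approx_def by blast

lemma cauchy_approx_in: "cauchy_approx S x \<Longrightarrow> 0 < \<delta> \<Longrightarrow> x \<delta> \<in> S"
  unfolding cauchy_approx_def by blast

lemma RE_subset_RD: "RE \<subseteq> RD"
  unfolding RE_def by blast

lemma
  assumes x: "cauchy_approx RD x"
  shows lim_D_in_RD: "lim_D x \<in> RD"
    and real_of_cut_lim_D: "0 < \<delta> \<Longrightarrow> \<bar>real_of_cut (x \<delta>) - real_of_cut (lim_D x)\<bar> \<le> of_rat \<delta>"
proof -
  have "\<bar>real_of_cut (x \<delta>) - real_of_cut (x \<epsilon>)\<bar> < of_rat (\<delta> + \<epsilon>)" if "0 < \<delta>" "0 < \<epsilon>" for \<delta> \<epsilon>
  proof -
    have "close_D (\<delta> + \<epsilon>) (x \<delta>) (x \<epsilon>)" using x that unfolding cauchy_approx_def by blast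
    then show ?thesis
      by (simp add: close_D_iff[OF cauchy_approx_in[OF x that(1)] cauchy_approx_in[OF x that(2)]])
  qed
  from rat_cauchy_family_has_limit[OF this]
  obtain L where near: "\<And>\<delta>. 0 < \<delta> \<Longrightarrow> \<bar>real_of_cut (x \<delta>) - L\<bar> \<le> of_rat \<delta>"
    by blast
  have "x \<delta> = cut_of_real (real_of_cut (x \<delta>))" if "0 < \<delta>" for \<delta>
    by (simp add: cut_of_real_real_of_cut cauchy_approx_in[OF x that])
  then have lim: "lim_D x = cut_of_real L"
    using near by (rule lim_D_cut_of_real)
  show "lim_D x \<in> RD" by (simp add: lim cut_of_real_in_RD)
  show "\<bar>real_of_cut (x \<delta>) - real_of_cut (lim_D x)\<bar> \<le> of_rat \<delta>" if "0 < \<delta>"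
    using near[OF that] by (simp add: lim real_of_cut_cut_of_real)
qed

lemma is_limit_lim_D:
  assumes x: "cauchy_approx RD x" shows "is_limit x (lim_D x)"
  unfolding is_limit_def
proof (intro allI impI)
  fix \<epsilon> \<theta> :: rat assume "0 < \<epsilon>" "0 < \<theta>"
  then have "(0::real) < of_rat \<theta>"
    and "\<bar>real_of_cut (x \<epsilon>) - real_of_cut (lim_D x)\<bar> \<le> of_rat \<epsilon>"
    using real_of_cut_lim_D[OF x] by simp_all
  then have "\<bar>real_of_cut (x \<epsilon>) - real_of_cut (lim_D x)\<bar> < of_rat (\<epsilon> + \<theta>)"
    unfolding of_rat_add by linarith
  then show "close_D (\<epsilon> + \<theta>) (x \<epsilon>) (lim_D x)"
    by (simp add: close_D_iff[OF cauchy_approx_in[OF x \<open>0 < \<epsilon>\<close>] lim_D_in_RD[OF x]])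
qed

lemma is_limit_unique:
  assumes x: "cauchy_approx RD x" and u: "u \<in> RD" and v: "v \<in> RD"
    and "is_limit x u" "is_limit x v"
  shows "u = v"
proof (rule RD_eqI[OF u v])
  fix \<epsilon> :: rat assume "0 < \<epsilon>"
  define \<delta> where "\<delta> = \<epsilon> / 4"
  have "0 < \<delta>" using \<open>0 < \<epsilon>\<close> by (simp add: \<delta>_def)
  then have "close_D (\<delta> + \<delta>) (x \<delta>) u" "close_D (\<delta> + \<delta>) (x \<delta>) v"
    using assms unfolding is_limit_def by blast+
  then have "\<bar>real_of_cut (x \<delta>) - real_of_cut u\<bar> < of_rat (\<delta> + \<delta>)"
    and "\<bar>real_of_cut (x \<delta>) - real_of_cut v\<bar> < of_rat (\<delta> + \<delta>)"
    by (simp_all add: close_D_iff[OF cauchy_approx_in[OF x \<open>0 < \<delta>\<close>]] u v)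
  then have "\<bar>real_of_cut u - real_of_cut v\<bar> < of_rat (\<delta> + \<delta>) + of_rat (\<delta> + \<delta>)"
    unfolding abs_less_iff by linarith
  also have "\<dots> = of_rat \<epsilon>" by (simp add: \<delta>_def flip: of_rat_add)
  finally show "close_D \<epsilon> u v" by (simp add: close_D_iff[OF u v])
qed

lemma rat_D_in_RE: "rat_D q \<in> RE"
  unfolding RE_def using rat_D_in_RD by blast

lemma lim_D_in_RE:
  assumes x: "cauchy_approx RE x" shows "lim_D x \<in> RE"
proof -
  have x_RD: "cauchy_approx RD x" using cauchy_approx_mono[OF RE_subset_RD x] .
  have "lim_D x \<in> S" if S: "S \<subseteq> RD" "range rat_D \<subseteq> S" "cauchy_complete S" for S
  proof -
    have "RE \<subseteq> S" using S unfolding RE_def by blast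
    then have "cauchy_approx S x" using cauchy_approx_mono x by blast
    then obtain u where u: "u \<in> S" "is_limit x u" using S(3) unfolding cauchy_complete_def by blast
    have "u = lim_D x"
      using is_limit_unique[OF x_RD _ lim_D_in_RD[OF x_RD] u(2) is_limit_lim_D[OF x_RD]] u(1) S(1)
      by blast
    then show ?thesis using u(1) by simp
  qed
  then show ?thesis unfolding RE_def using lim_D_in_RD[OF x_RD] by blast
qed

lemma close_D_lim_D_right:
  assumes y: "cauchy_approx RD y" and u: "u \<in> RD" and "0 < \<delta>" and "close_D \<epsilon> u (y \<delta>)"
  shows "close_D (\<epsilon> + \<delta>) u (lim_D y)"
proof -
  have "\<bar>real_of_cut u - real_of_cut (y \<delta>)\<bar> < of_rat \<epsilon>"
    using assms by (simp add: close_D_iff[OF u cauchy_approx_in[OF y \<open>0 < \<delta>\<close>]])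
  moreover have "\<bar>real_of_cut (y \<delta>) - real_of_cut (lim_D y)\<bar> \<le> of_rat \<delta>"
    using real_of_cut_lim_D[OF y \<open>0 < \<delta>\<close>] .
  ultimately have "\<bar>real_of_cut u - real_of_cut (lim_D y)\<bar> < of_rat (\<epsilon> + \<delta>)"
    unfolding of_rat_add abs_less_iff abs_le_iff by linarith
  then show ?thesis by (simp add: close_D_iff[OF u lim_D_in_RD[OF y]])
qed

lemma close_D_lim_D_left:
  assumes x: "cauchy_approx RD x" and v: "v \<in> RD" and "0 < \<delta>" and "close_D \<epsilon> (x \<delta>) v"
  shows "close_D (\<epsilon> + \<delta>) (lim_D x) v"
proof -
  have "close_D \<epsilon> v (x \<delta>)"
    using assms close_D_sym[OF cauchy_approx_in[OF x \<open>0 < \<delta>\<close>] v] by blast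
  then have "close_D (\<epsilon> + \<delta>) v (lim_D x)" by (rule close_D_lim_D_right[OF x v \<open>0 < \<delta>\<close>])
  then show ?thesis by (rule close_D_sym[OF v lim_D_in_RD[OF x]])
qed

theorem proposition2p28:
  shows "(\<forall>q. rat_D q \<in> RE)
    \<and> (\<forall>x. cauchy_approx RE x \<longrightarrow> lim_D x \<in> RE)
    \<and> (\<forall>u\<in>RE. \<forall>v\<in>RE. (\<forall>\<epsilon>>0. close_D \<epsilon> u v) \<longrightarrow> u = v)
    \<and> (\<forall>q r \<epsilon>. 0 < \<epsilon> \<longrightarrow> - \<epsilon> < q - r \<longrightarrow> q - r < \<epsilon> \<longrightarrow> close_D \<epsilon> (rat_D q) (rat_D r))
    \<and> (\<forall>q y \<epsilon> \<delta>. cauchy_approx RE y \<longrightarrow> 0 < \<epsilon> \<longrightarrow> 0 < \<delta> \<longrightarrow>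
          close_D \<epsilon> (rat_D q) (y \<delta>) \<longrightarrow> close_D (\<epsilon> + \<delta>) (rat_D q) (lim_D y))
    \<and> (\<forall>x r \<epsilon> \<delta>. cauchy_approx RE x \<longrightarrow> 0 < \<epsilon> \<longrightarrow> 0 < \<delta> \<longrightarrow>
          close_D \<epsilon> (x \<delta>) (rat_D r) \<longrightarrow> close_D (\<epsilon> + \<delta>) (lim_D x) (rat_D r))
    \<and> (\<forall>x y \<epsilon> \<delta> \<eta>. cauchy_approx RE x \<longrightarrow> cauchy_approx RE y \<longrightarrow>
          0 < \<epsilon> \<longrightarrow> 0 < \<delta> \<longrightarrow> 0 < \<eta> \<longrightarrow>
          close_D \<epsilon> (x \<delta>) (y \<eta>) \<longrightarrow> close_D (\<epsilon> + \<delta> + \<eta>) (lim_D x) (lim_D y))"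
proof (intro conjI allI impI ballI)
  have RD: "cauchy_approx RD x" if "cauchy_approx RE x" for x
    using cauchy_approx_mono[OF RE_subset_RD that] .
  show "rat_D q \<in> RE" for q by (rule rat_D_in_RE)
  show "lim_D x \<in> RE" if "cauchy_approx RE x" for x using that by (rule lim_D_in_RE)
  show "u = v" if "u \<in> RE" "v \<in> RE" "\<forall>\<epsilon>>0. close_D \<epsilon> u v" for u v
    by (rule RD_eqI) (use that RE_subset_RD in auto)
  show "close_D \<epsilon> (rat_D q) (rat_D r)" if "- \<epsilon> < q - r" "q - r < \<epsilon>" for q r \<epsilon> :: rat
    using that by (intro close_D_rat_D) linarith
  show "close_D (\<epsilon> + \<delta>) (rat_D q) (lim_D y)"
    if "cauchy_approx RE y" "0 < \<delta>" "close_D \<epsilon> (rat_D q) (y \<delta>)" for q y \<epsilon> \<delta>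
    using close_D_lim_D_right[OF RD rat_D_in_RD] that by blast
  show "close_D (\<epsilon> + \<delta>) (lim_D x) (rat_D r)"
    if "cauchy_approx RE x" "0 < \<delta>" "close_D \<epsilon> (x \<delta>) (rat_D r)" for x r \<epsilon> \<delta>
    using close_D_lim_D_left[OF RD rat_D_in_RD] that by blast
  show "close_D (\<epsilon> + \<delta> + \<eta>) (lim_D x) (lim_D y)"
    if "cauchy_approx RE x" "cauchy_approx RE y" "0 < \<delta>" "0 < \<eta>"
      "close_D \<epsilon> (x \<delta>) (y \<eta>)" for x y \<epsilon> \<delta> \<eta>
  proof -
    have "close_D (\<epsilon> + \<delta>) (lim_D x) (y \<eta>)"
      using close_D_lim_D_left[OF RD cauchy_approx_in[OF RD]] that by blast
    then show ?thesis using close_D_lim_D_right[OF RD lim_D_in_RD[OF RD]] that by blast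
  qed
qed

end
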